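(* Let $d\ge 1$, $\sigma_1>0$ and $q_1,\dots,q_d>0$, and put $q=\min_j q_j$. Let $\mu\in\mathbb{R}^d$ satisfy $|\mu(j)|\le q_j$ for every $j\in[d]$, let $e\sim\mathcal{N}(\mathbf{0},\sigma_1^2 I_d)$, and define the censored perturbed context $x\in\mathbb{R}^d$ coordinatewise by $$x(j)=\begin{cases}\mu(j)+e(j), & \text{if } |\mu(j)+e(j)|\le q_j,\\ q_j, & \text{if } \mu(j)+e(j)>q_j,\\ -q_j, & \text{if } \mu(j)+e(j)<-q_j.\end{cases}$$ Then $x$ has the perturbed diversity property with $\lambda_0=g\!\left(\tfrac{2q}{\sigma_1},0\right)\sigma_1^2$, i.e. $$\lambda_{\min}\!\left(\mathbb{E}_{e}\left[x x^{\top}\right]\right)\ \ge\ g\!\left(\tfrac{2q}{\sigma_1},0\right)\sigma_1^2 .$$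
   Context: $\lambda_{\min}(\cdot)$ denotes the smallest eigenvalue of a symmetric matrix. For real numbers $\alpha\le\beta$, $g(\beta,\alpha)$ denotes the variance of a standard normal variable censored to $[\alpha,\beta]$, i.e. $g(\beta,\alpha)=\mathrm{Var}\big(\max(\alpha,\min(\beta,Z))\big)$ with $Z\sim\mathcal{N}(0,1)$; equivalently, for $e\sim\mathcal{N}(0,\sigma_1^2)$, the variance of $e$ censored (clipped) to $[\alpha\sigma_1,\beta\sigma_1]$ equals $g(\beta,\alpha)\sigma_1^2$. (The paper expresses $g$ through an explicit formula in the standard normal density $\phi$ and distribution function $\Phi$.) *)

theory Defs
  imports "HOL-Probability.Probability"
begin

definition lambda_min :: "real^'n^'n \<Rightarrow> real" where
  "lambda_min A = Min {c. \<exists>v. v \<noteq> 0 \<and> A *v v = c *\<^sub>R v}"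

definition std_normal :: "real measure" where
  "std_normal = density lborel std_normal_density"

definition g :: "real \<Rightarrow> real \<Rightarrow> real" where
  "g beta alpha =
     (let c = (\<lambda>z. max alpha (min beta z)) in
      LINT z|std_normal. (c z - (LINT w|std_normal. c w))\<^sup>2)"

(* law of e ~ N(0, sigma1^2 I_d), coordinates indexed by the finite type 'n *)
definition gauss_vec :: "real \<Rightarrow> ('n::finite \<Rightarrow> real) measure" where
  "gauss_vec s = PiM UNIV (\<lambda>_. density lborel (normal_density 0 s))"

definition ctx :: "('n \<Rightarrow> real) \<Rightarrow> ('n \<Rightarrow> real) \<Rightarrow> ('n \<Rightarrow> real) \<Rightarrow> 'n \<Rightarrow> real" where
  "ctx q \<mu> e j = (if \<bar>\<mu> j + e j\<bar> \<le> q j then \<mu> j + e j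
                  else if \<mu> j + e j > q j then q j else - q j)"

end

theory Submission
  imports Defs "HOL-Real_Asymp.Real_Asymp"
begin

(* Independence of the coordinates of e gives E[x x^T] = m m^T + diag (Var x(j)), whose smallest
   eigenvalue is at least min_j Var x(j).  In standardized form x(j) = mu(j) + sigma1 * max a (min b Z)
   with a <= 0 <= b and b - a = 2 q_j / sigma1 >= beta = 2 q / sigma1.  Censoring is 1-Lipschitz, so
   passing to a subwindow [c, c + beta] with -beta <= c <= 0 can only decrease the variance.  Among
   these windows the variance is smallest at the ends c = 0 and c = -beta: the variance is symmetric
   under c |-> -beta - c and, by its closed form in phi and Phi, decreasing on [-beta/2, 0].  The sign
   of the derivative comes down to the monotonicity of (H (x + l) - H x) / Phi x for the antiderivative
   H of Phi, which in turn rests on the Mills ratio bound Phi x <= phi x / |x| for x < 0. *)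

section \<open>Smallest eigenvalue of a symmetric matrix\<close>

lemma symmetric_matrix_inner_commute:
  fixes A :: "real^'n^'n"
  assumes "transpose A = A"
  shows "(A *v x) \<bullet> y = x \<bullet> (A *v y)"
  by (metis assms dot_lmul_matrix vector_transpose_matrix)

lemma symmetric_eigenvectors_orthogonal:
  fixes A :: "real^'n^'n"
  assumes "transpose A = A" "A *v v = c *\<^sub>R v" "A *v w = d *\<^sub>R w" "c \<noteq> d"
  shows "v \<bullet> w = 0"
proof -
  have "c * (v \<bullet> w) = (A *v v) \<bullet> w" using assms by simp
  also have "\<dots> = v \<bullet> (A *v w)" by (rule symmetric_matrix_inner_commute[OF assms(1)])
  also have "\<dots> = d * (v \<bullet> w)" using assms by simp
  finally show ?thesis using assms(4) by simp
qed

lemma finite_eigenvalues_symmetric: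
  fixes A :: "real^'n^'n"
  assumes "transpose A = A"
  shows "finite {c. \<exists>v. v \<noteq> 0 \<and> A *v v = c *\<^sub>R v}"
proof -
  define S where "S = {c. \<exists>v. v \<noteq> 0 \<and> A *v v = c *\<^sub>R v}"
  define ev where "ev c = (SOME v. v \<noteq> 0 \<and> A *v v = c *\<^sub>R v)" for c
  have ev: "ev c \<noteq> 0 \<and> A *v ev c = c *\<^sub>R ev c" if "c \<in> S" for c
    using that unfolding S_def ev_def by (metis (mono_tags, lifting) mem_Collect_eq someI_ex)
  have "inj_on ev S"
  proof (rule inj_onI)
    fix c d assume "c \<in> S" "d \<in> S" "ev c = ev d"
    then have "c *\<^sub>R ev c = d *\<^sub>R ev c" using ev by metis
    then show "c = d" using ev \<open>c \<in> S\<close> by (simp add: scaleR_cancel_right)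
  qed
  moreover have "independent (ev ` S)"
  proof (rule pairwise_orthogonal_independent)
    show "pairwise orthogonal (ev ` S)"
      unfolding pairwise_def orthogonal_def
      by (smt (verit) assms symmetric_eigenvectors_orthogonal ev image_iff)
    show "0 \<notin> ev ` S" using ev by auto
  qed
  ultimately show ?thesis
    using independent_bound finite_imageD S_def by blast
qed

lemma psd_symmetric_quadratic_form_zero:
  fixes B :: "real^'n^'n"
  assumes sym: "transpose B = B" and psd: "\<And>x. 0 \<le> x \<bullet> (B *v x)"
    and zero: "v \<bullet> (B *v v) = 0"
  shows "B *v v = 0"
proof -
  define w where "w = B *v v"
  define K where "K = w \<bullet> (B *v w) + 1"
  have "K > 0" using psd[of w] K_def by simp
  \<comment> \<open>Expanding the form at v + t w with t = - |w|^2 / K gives - |w|^4 (1/K + 1/K^2) \<ge> 0.\<close>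
  define t where "t = - (w \<bullet> w) / K"
  have "(v + t *\<^sub>R w) \<bullet> (B *v (v + t *\<^sub>R w)) = 2 * t * (w \<bullet> w) + t\<^sup>2 * (K - 1)"
    using symmetric_matrix_inner_commute[OF sym, of w v] zero
    by (simp add: w_def K_def matrix_vector_right_distrib matrix_vector_mult_scaleR
        inner_add_left inner_add_right inner_commute algebra_simps power2_eq_square)
  also have "\<dots> = - ((w \<bullet> w)\<^sup>2 / K) - (w \<bullet> w)\<^sup>2 / K\<^sup>2"
    using \<open>K > 0\<close> by (simp add: t_def power2_eq_square field_simps)
  finally have "(w \<bullet> w)\<^sup>2 / K + (w \<bullet> w)\<^sup>2 / K\<^sup>2 \<le> 0"
    using psd[of "v + t *\<^sub>R w"] by linarith
  moreover have "(w \<bullet> w)\<^sup>2 / K \<ge> 0" "(w \<bullet> w)\<^sup>2 / K\<^sup>2 \<ge> 0" using \<open>K > 0\<close> by auto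
  ultimately have "(w \<bullet> w)\<^sup>2 / K = 0" by linarith
  then show ?thesis using \<open>K > 0\<close> by (simp add: w_def)
qed

lemma symmetric_matrix_has_eigenvalue:
  fixes A :: "real^'n^'n"
  assumes sym: "transpose A = A"
  shows "\<exists>c v. v \<noteq> 0 \<and> A *v v = c *\<^sub>R v"
proof -
  define f where "f v = v \<bullet> (A *v v)" for v :: "real^'n"
  have "continuous_on (sphere 0 1) f"
    unfolding f_def by (intro continuous_on_inner continuous_on_id matrix_vector_mult_linear_continuous_on)
  moreover have "sphere (0::real^'n) 1 \<noteq> {}"
    using vector_choose_size[of 1] by auto
  ultimately obtain v where v: "v \<in> sphere 0 1" and min: "\<And>u. u \<in> sphere 0 1 \<Longrightarrow> f v \<le> f u"
    using continuous_attains_inf[OF compact_sphere] by blast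
  define B where "B = A - f v *\<^sub>R mat 1"
  have B_apply: "B *v x = A *v x - f v *\<^sub>R x" for x
    by (simp add: B_def matrix_vector_mult_diff_rdistrib scaleR_matrix_vector_assoc[symmetric])
  have "transpose B = B"
    using sym by (simp add: B_def transpose_def vec_eq_iff mat_def)
  moreover have "0 \<le> x \<bullet> (B *v x)" for x
  proof (cases "x = 0")
    case False
    have "f v \<le> f ((1 / norm x) *\<^sub>R x)" using False by (intro min) simp
    also have "\<dots> = (x \<bullet> (A *v x)) / (norm x)\<^sup>2"
      unfolding f_def by (simp add: matrix_vector_mult_scaleR power2_eq_square)
    finally have "f v * (norm x)\<^sup>2 \<le> x \<bullet> (A *v x)"
      using False by (simp add: pos_le_divide_eq)
    then show ?thesis by (simp add: B_apply inner_diff_right power2_norm_eq_inner)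
  qed (simp add: B_apply)
  moreover have "v \<bullet> (B *v v) = 0"
    using v by (simp add: B_apply inner_diff_right f_def power2_norm_eq_inner[symmetric])
  ultimately have "B *v v = 0" by (rule psd_symmetric_quadratic_form_zero)
  then have "A *v v = f v *\<^sub>R v" by (simp add: B_apply)
  moreover have "v \<noteq> 0" using v by auto
  ultimately show ?thesis by blast
qed

lemma lambda_min_ge_if_quadratic_form_ge:
  fixes A :: "real^'n^'n"
  assumes sym: "transpose A = A"
    and form: "\<And>v. l * (v \<bullet> v) \<le> v \<bullet> (A *v v)"
  shows "l \<le> lambda_min A"
  unfolding lambda_min_def
proof (subst Min_ge_iff)
  show "finite {c. \<exists>v. v \<noteq> 0 \<and> A *v v = c *\<^sub>R v}"
    by (rule finite_eigenvalues_symmetric[OF sym])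
  show "{c. \<exists>v. v \<noteq> 0 \<and> A *v v = c *\<^sub>R v} \<noteq> {}"
    using symmetric_matrix_has_eigenvalue[OF sym] by blast
  show "\<forall>c\<in>{c. \<exists>v. v \<noteq> 0 \<and> A *v v = c *\<^sub>R v}. l \<le> c"
  proof safe
    fix c v assume v: "v \<noteq> 0" "A *v v = c *\<^sub>R v"
    then have "l * (v \<bullet> v) \<le> c * (v \<bullet> v)" using form[of v] by simp
    then show "l \<le> c" using v by (simp add: mult_le_cancel_right)
  qed
qed

lemma lambda_min_rank_one_plus_diagonal_ge:
  fixes A :: "real^'n^'n"
  assumes A: "\<And>i k. A $ i $ k = m i * m k + (if i = k then d i else 0)" and d: "\<And>i. l \<le> d i"
  shows "l \<le> lambda_min A"
proof (rule lambda_min_ge_if_quadratic_form_ge)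
  show "transpose A = A"
    by (simp add: vec_eq_iff transpose_def A mult.commute)
  fix v :: "real^'n"
  have "v \<bullet> (A *v v) = (\<Sum>i\<in>UNIV. v $ i * (\<Sum>k\<in>UNIV. (m i * m k + (if i = k then d i else 0)) * v $ k))"
    by (simp add: inner_vec_def matrix_vector_mult_def A)
  also have "\<dots> = (\<Sum>i\<in>UNIV. (v $ i * m i) * (\<Sum>k\<in>UNIV. v $ k * m k) + (v $ i)\<^sup>2 * d i)"
  proof (rule sum.cong[OF refl])
    fix i
    have "(\<Sum>k\<in>UNIV. (m i * m k + (if i = k then d i else 0)) * v $ k)
        = (\<Sum>k\<in>UNIV. m i * (v $ k * m k) + (if i = k then d i * v $ k else 0))"
      by (rule sum.cong) (auto simp: algebra_simps)
    also have "\<dots> = (\<Sum>k\<in>UNIV. m i * (v $ k * m k)) + (\<Sum>k\<in>UNIV. if i = k then d i * v $ k else 0)"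
      by (rule sum.distrib)
    also have "\<dots> = m i * (\<Sum>k\<in>UNIV. v $ k * m k) + d i * v $ i"
      by (simp add: sum_distrib_left)
    finally show "v $ i * (\<Sum>k\<in>UNIV. (m i * m k + (if i = k then d i else 0)) * v $ k)
        = (v $ i * m i) * (\<Sum>k\<in>UNIV. v $ k * m k) + (v $ i)\<^sup>2 * d i"
      by (simp add: algebra_simps power2_eq_square)
  qed
  also have "\<dots> = (\<Sum>i\<in>UNIV. v $ i * m i)\<^sup>2 + (\<Sum>i\<in>UNIV. (v $ i)\<^sup>2 * d i)"
    by (simp add: sum.distrib power2_eq_square sum_distrib_right)
  also have "\<dots> \<ge> (\<Sum>i\<in>UNIV. (v $ i)\<^sup>2 * d i)" by simp
  also have "(\<Sum>i\<in>UNIV. (v $ i)\<^sup>2 * d i) \<ge> (\<Sum>i\<in>UNIV. (v $ i)\<^sup>2 * l)"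
    using d by (intro sum_mono mult_left_mono) auto
  finally show "l * (v \<bullet> v) \<le> v \<bullet> (A *v v)"
    by (simp add: inner_vec_def sum_distrib_left power2_eq_square mult_ac)
qed

section \<open>Variance\<close>

lemma (in prob_space) variance_le_expectation_sq_diff:
  fixes Y :: "'a \<Rightarrow> real"
  assumes Y: "integrable M Y" and Y_t: "integrable M (\<lambda>x. (Y x - t)\<^sup>2)"
  shows "variance Y \<le> expectation (\<lambda>x. (Y x - t)\<^sup>2)"
proof -
  have "variance Y
      = expectation (\<lambda>x. (Y x - t)\<^sup>2 - 2 * (expectation Y - t) * (Y x - t) + (expectation Y - t)\<^sup>2)"
    by (rule arg_cong[where f = expectation]) (simp add: fun_eq_iff power2_eq_square algebra_simps)
  also have "\<dots> = expectation (\<lambda>x. (Y x - t)\<^sup>2) - 2 * (expectation Y - t) * expectation (\<lambda>x. Y x - t)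
      + (expectation Y - t)\<^sup>2"
    using Y Y_t by (simp add: prob_space)
  also have "\<dots> = expectation (\<lambda>x. (Y x - t)\<^sup>2) - (expectation Y - t)\<^sup>2"
    using Y by (simp add: prob_space power2_eq_square)
  finally show ?thesis by simp
qed

lemma (in prob_space) variance_affine_integrable:
  fixes X :: "'a \<Rightarrow> real"
  assumes "integrable M X"
  shows "variance (\<lambda>x. a + b * X x) = b\<^sup>2 * variance X"
proof -
  have "expectation (\<lambda>x. a + b * X x) = a + b * expectation X"
    using assms by (simp add: prob_space)
  then have "(\<lambda>x. (a + b * X x - expectation (\<lambda>x. a + b * X x))\<^sup>2)
      = (\<lambda>x. b\<^sup>2 * (X x - expectation X)\<^sup>2)"
    by (simp add: fun_eq_iff power2_eq_square algebra_simps)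
  then show ?thesis by simp
qed

lemma (in prob_space) variance_Lipschitz_le:
  fixes X :: "'a \<Rightarrow> real"
  assumes X: "integrable M X" and X2: "integrable M (\<lambda>x. (X x)\<^sup>2)"
    and [measurable]: "f \<in> borel_measurable borel"
    and f_Lipschitz: "\<And>x y. \<bar>f x - f y\<bar> \<le> \<bar>x - y\<bar>"
  shows "variance (\<lambda>x. f (X x)) \<le> variance X"
proof -
  define m where "m = expectation X"
  have X_meas[measurable]: "X \<in> borel_measurable M" using X by simp
  have X_m: "integrable M (\<lambda>x. (X x - m)\<^sup>2)"
    using X X2 by (simp add: power2_diff)
  have fX_fm: "integrable M (\<lambda>x. (f (X x) - f m)\<^sup>2)"
  proof (rule Bochner_Integration.integrable_bound[OF X_m])
    show "AE x in M. norm ((f (X x) - f m)\<^sup>2) \<le> norm ((X x - m)\<^sup>2)"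
      using f_Lipschitz by (auto simp: abs_le_square_iff)
  qed simp
  have fX: "integrable M (\<lambda>x. f (X x))"
  proof -
    have "integrable M (\<lambda>x. f m + (f (X x) - f m))"
    proof (intro Bochner_Integration.integrable_add)
      show "integrable M (\<lambda>x. f (X x) - f m)"
      proof (rule Bochner_Integration.integrable_bound[where f = "\<lambda>x. X x - m"])
        show "AE x in M. norm (f (X x) - f m) \<le> norm (X x - m)"
          using f_Lipschitz by auto
      qed (use X in simp_all)
    qed simp
    then show ?thesis by simp
  qed
  have "variance (\<lambda>x. f (X x)) \<le> expectation (\<lambda>x. (f (X x) - f m)\<^sup>2)"
    by (rule variance_le_expectation_sq_diff[OF fX fX_fm])
  also have "\<dots> \<le> expectation (\<lambda>x. (X x - m)\<^sup>2)"
    using f_Lipschitz by (intro integral_mono[OF fX_fm X_m]) (simp add: abs_le_square_iff)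
  finally show ?thesis by (simp add: m_def)
qed

lemma (in prob_space) integral_PiM_coordinate_products:
  fixes X :: "'i::finite \<Rightarrow> 'a \<Rightarrow> real"
  assumes X: "\<And>j. integrable M (X j)" and X2: "\<And>j. integrable M (\<lambda>x. (X j x)\<^sup>2)"
  shows "(LINT e|PiM UNIV (\<lambda>_. M). X i (e i) * X k (e k))
    = expectation (X i) * expectation (X k) + (if i = k then variance (X i) else 0)"
proof -
  interpret Pi: product_prob_space "\<lambda>_::'i. M" UNIV
    by (intro product_prob_space.intro product_sigma_finite.intro product_prob_space_axioms.intro)
      (simp_all add: sigma_finite_measure_axioms prob_space_axioms)
  define f where "f = (\<lambda>j x. (if j = i then X i x else 1) * (if j = k then X k x else 1))"
  have "(LINT e|PiM UNIV (\<lambda>_. M). X i (e i) * X k (e k)) = (LINT e|PiM UNIV (\<lambda>_. M). (\<Prod>j\<in>UNIV. f j (e j)))"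
    by (simp add: f_def prod.distrib)
  also have "\<dots> = (\<Prod>j\<in>UNIV. expectation (f j))"
  proof (rule Pi.product_integral_prod)
    show "integrable M (f j)" for j
      using X[of i] X[of k] X2[of i] by (cases "j = i"; cases "j = k") (simp_all add: f_def power2_eq_square)
  qed simp
  also have "\<dots> = expectation (X i) * expectation (X k) + (if i = k then variance (X i) else 0)"
  proof (cases "i = k")
    case True
    then have "(\<Prod>j\<in>UNIV. expectation (f j)) = (\<Prod>j\<in>UNIV. if j = i then expectation (\<lambda>x. (X i x)\<^sup>2) else 1)"
      by (intro prod.cong) (auto simp: f_def prob_space power2_eq_square)
    with True show ?thesis
      using variance_eq[OF X[of i] X2[of i]] by (simp add: power2_eq_square)
  next
    case False
    then have "(\<Prod>j\<in>UNIV. expectation (f j))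
        = (\<Prod>j\<in>UNIV. (if j = i then expectation (X i) else 1) * (if j = k then expectation (X k) else 1))"
      by (intro prod.cong) (auto simp: f_def prob_space)
    with False show ?thesis by (simp add: prod.distrib)
  qed
  finally show ?thesis .
qed

section \<open>The standard normal distribution\<close>

abbreviation phi :: "real \<Rightarrow> real" where
  "phi \<equiv> std_normal_density"

definition Phi :: "real \<Rightarrow> real" where
  "Phi x = (LBINT t=-\<infinity>..ereal x. phi t)"

lemma phi_has_real_derivative: "(phi has_real_derivative (- x * phi x)) (at x)"
proof -
  have "((\<lambda>x. exp (- x\<^sup>2 / 2)) has_real_derivative (exp (- x\<^sup>2 / 2) * (- x))) (at x)"
    by (auto intro!: derivative_eq_intros simp: power2_eq_square)
  from DERIV_cmult[OF this, of "1 / sqrt (2 * pi)"] show ?thesis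
    unfolding std_normal_density_def by (simp add: mult_ac)
qed

lemma continuous_on_phi: "continuous_on S phi"
  unfolding std_normal_density_def by (intro continuous_intros) auto

lemma phi_pos: "0 < phi x"
  by (rule normal_density_pos) simp

lemma phi_minus: "phi (- x) = phi x"
  unfolding std_normal_density_def by simp

lemma phi_tendsto_at_bot: "(phi \<longlongrightarrow> 0) at_bot"
  unfolding std_normal_density_def by real_asymp

lemma interval_integrable_of_integrable:
  fixes f :: "real \<Rightarrow> real"
  assumes "integrable lborel f"
  shows "interval_lebesgue_integrable lborel a b f"
  unfolding interval_lebesgue_integrable_def set_integrable_def
  using integrable_mult_indicator[OF _ assms] by auto

lemma interval_integrable_phi: "interval_lebesgue_integrable lborel a b phi"
  by (rule interval_integrable_of_integrable) simp

lemma interval_integral_phi_split: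
  "(LBINT t=-\<infinity>..ereal x. phi t) + (LBINT t=ereal x..c. phi t) = (LBINT t=-\<infinity>..c. phi t)"
  by (rule interval_integral_sum) (rule interval_integrable_phi)

lemma Phi_has_real_derivative: "(Phi has_real_derivative phi x) (at x)"
proof -
  have "((\<lambda>u. LBINT t=(x-1)..u. phi t) has_vector_derivative phi x) (at x within {x-1..x+1})"
    by (rule interval_integral_FTC2) (auto intro: continuous_on_phi)
  then have "((\<lambda>u. LBINT t=(x-1)..u. phi t) has_vector_derivative phi x) (at x)"
    by (subst (asm) at_within_interior) auto
  then have "((\<lambda>u. Phi (x - 1) + (LBINT t=(x-1)..u. phi t)) has_real_derivative phi x) (at x)"
    by (auto intro!: derivative_eq_intros simp: has_real_derivative_iff_has_vector_derivative)
  moreover have "Phi = (\<lambda>u. Phi (x - 1) + (LBINT t=(x-1)..u. phi t))"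
    using interval_integral_phi_split[of "x - 1"] by (simp add: Phi_def fun_eq_iff)
  ultimately show ?thesis by simp
qed

lemma Phi_pos: "0 < Phi x"
proof -
  have "0 \<le> Phi (x - 1)"
    unfolding Phi_def interval_lebesgue_integral_def set_lebesgue_integral_def
    by (auto intro!: Bochner_Integration.integral_nonneg simp: indicator_def)
  also have "\<dots> < Phi x"
    using DERIV_pos_imp_increasing[of "x - 1" x Phi] Phi_has_real_derivative phi_pos by auto
  finally show ?thesis .
qed

lemma Phi_upper_tail: "(LBINT t=ereal x..\<infinity>. phi t) = 1 - Phi x"
proof -
  have "(LBINT t=-\<infinity>..\<infinity>. phi t) = 1"
    unfolding interval_lebesgue_integral_def set_lebesgue_integral_def by simp
  then show ?thesis using interval_integral_phi_split[of x \<infinity>] by (simp add: Phi_def)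
qed

lemma Phi_minus: "Phi (- x) = 1 - Phi x"
proof -
  have "(LBINT t=ereal x..\<infinity>. phi t) = (LBINT t=-\<infinity>..-ereal x. phi (- t))"
    by (subst interval_integral_reflect) simp
  then show ?thesis unfolding Phi_upper_tail Phi_def phi_minus by simp
qed

lemma Phi_le_mills_ratio:
  assumes "x < 0"
  shows "Phi x \<le> phi x / (- x)"
proof -
  have "- \<infinity> < ereal x" by simp
  moreover have "isCont (\<lambda>t. - t * phi t) t" for t
    unfolding std_normal_density_def by (intro continuous_intros) auto
  moreover have "AE t in lborel. - \<infinity> < ereal t \<longrightarrow> ereal t < ereal x \<longrightarrow> 0 \<le> - t * phi t"
    using assms phi_pos by (auto intro!: AE_I2 simp: mult_nonpos_nonneg less_imp_le)
  moreover have "((phi \<circ> real_of_ereal) \<longlongrightarrow> 0) (at_right (- \<infinity>))"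
    unfolding ereal_tendsto_simps by (rule phi_tendsto_at_bot)
  moreover have "((phi \<circ> real_of_ereal) \<longlongrightarrow> phi x) (at_left (ereal x))"
    unfolding ereal_tendsto_simps using phi_has_real_derivative[of x]
    by (meson DERIV_isCont isCont_def tendsto_within_subset subset_UNIV filterlim_at_split)
  ultimately have FTC: "set_integrable lborel (einterval (-\<infinity>) (ereal x)) (\<lambda>t. - t * phi t)"
      "(LBINT t=-\<infinity>..ereal x. - t * phi t) = phi x - 0"
    using interval_integral_FTC_nonneg[OF _ phi_has_real_derivative] by blast+
  have "Phi x = (LINT t:einterval (-\<infinity>) (ereal x)|lborel. phi t)"
    unfolding Phi_def interval_lebesgue_integral_def by simp
  also have "\<dots> \<le> (LINT t:einterval (-\<infinity>) (ereal x)|lborel. (- t * phi t) / (- x))"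
  proof (rule set_integral_mono)
    show "set_integrable lborel (einterval (- \<infinity>) (ereal x)) phi"
      using interval_integrable_phi[of "-\<infinity>" "ereal x"]
      unfolding interval_lebesgue_integrable_def by simp
    show "set_integrable lborel (einterval (- \<infinity>) (ereal x)) (\<lambda>t. - t * phi t / - x)"
      using FTC by (intro set_integrable_divide) auto
    fix t assume "t \<in> einterval (- \<infinity>) (ereal x)"
    then have "1 \<le> - t / - x" using assms by (simp add: field_simps)
    from mult_right_mono[OF this less_imp_le[OF phi_pos]]
    show "phi t \<le> - t * phi t / - x" by simp
  qed
  also have "\<dots> = (LINT t:einterval (-\<infinity>) (ereal x)|lborel. - t * phi t) / (- x)"
    by (rule set_integral_divide_zero)
  also have "\<dots> = phi x / (- x)"
    using FTC unfolding interval_lebesgue_integral_def by simp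
  finally show ?thesis .
qed

definition Phi_antideriv :: "real \<Rightarrow> real" where
  "Phi_antideriv x = x * Phi x + phi x"

lemma Phi_antideriv_has_real_derivative: "(Phi_antideriv has_real_derivative Phi x) (at x)"
  unfolding Phi_antideriv_def
  by (auto intro!: derivative_eq_intros Phi_has_real_derivative phi_has_real_derivative)

lemma Phi_antideriv_nonneg: "0 \<le> Phi_antideriv x"
proof (cases "x < 0")
  case True
  then have "(- x) * Phi x \<le> phi x"
    using Phi_le_mills_ratio[OF True] by (simp add: field_simps)
  then show ?thesis unfolding Phi_antideriv_def by simp
next
  case False
  then show ?thesis unfolding Phi_antideriv_def using Phi_pos[of x] phi_pos[of x] by simp
qed

lemma Phi_antideriv_minus: "Phi_antideriv (- x) = Phi_antideriv x - x"
  unfolding Phi_antideriv_def by (simp add: Phi_minus phi_minus algebra_simps)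

lemma Phi_mult_phi_le:
  assumes "x \<le> y"
  shows "Phi x * phi y \<le> Phi y * phi x"
proof -
  have "Phi x / phi x \<le> Phi y / phi y"
  proof (rule deriv_nonneg_imp_mono[OF _ _ assms])
    fix t
    show "((\<lambda>t. Phi t / phi t) has_real_derivative Phi_antideriv t / phi t) (at t)"
      using phi_pos[of t]
      by (auto intro!: derivative_eq_intros Phi_has_real_derivative phi_has_real_derivative
          simp: Phi_antideriv_def power2_eq_square field_simps)
    show "0 \<le> Phi_antideriv t / phi t" using Phi_antideriv_nonneg[of t] phi_pos[of t] by simp
  qed
  then show ?thesis using phi_pos[of x] phi_pos[of y] by (simp add: field_simps)
qed

lemma Phi_antideriv_increment_ratio_antimono:
  assumes "0 \<le> l" "x \<le> y"
  shows "(Phi_antideriv (y + l) - Phi_antideriv y) / Phi y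
    \<le> (Phi_antideriv (x + l) - Phi_antideriv x) / Phi x"
proof -
  define D where "D t s = (Phi_antideriv (t + s) - Phi_antideriv t) * phi t - (Phi (t + s) - Phi t) * Phi t"
    for t s
  have D_nonneg: "0 \<le> D t l" for t
  proof -
    have "D t 0 \<le> D t l"
    proof (rule deriv_nonneg_imp_mono[OF _ _ assms(1)])
      fix s
      show "(D t has_real_derivative Phi (t + s) * phi t - phi (t + s) * Phi t) (at s)"
        unfolding D_def
        by (auto intro!: derivative_eq_intros Phi_antideriv_has_real_derivative[THEN DERIV_chain2]
            Phi_has_real_derivative[THEN DERIV_chain2])
      assume "s \<in> {0..l}"
      then show "0 \<le> Phi (t + s) * phi t - phi (t + s) * Phi t"
        using Phi_mult_phi_le[of t "t + s"] by (simp add: mult.commute)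
    qed
    then show ?thesis by (simp add: D_def)
  qed
  show ?thesis
  proof (rule DERIV_nonpos_imp_nonincreasing[OF assms(2)])
    fix t
    have "((\<lambda>t. (Phi_antideriv (t + l) - Phi_antideriv t) / Phi t)
        has_real_derivative - D t l / (Phi t)\<^sup>2) (at t)"
      unfolding D_def using Phi_pos[of t]
      by (auto intro!: derivative_eq_intros Phi_antideriv_has_real_derivative[THEN DERIV_chain2]
          Phi_has_real_derivative simp: power2_eq_square field_simps)
    moreover have "- D t l / (Phi t)\<^sup>2 \<le> 0" using D_nonneg[of t] by simp
    ultimately show "\<exists>D. ((\<lambda>t. (Phi_antideriv (t + l) - Phi_antideriv t) / Phi t)
        has_real_derivative D) (at t) \<and> D \<le> 0"
      by blast
  qed
qed

text \<open>Closed forms of the mean, the second moment and the variance of max a (min b Z) for a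
  standard normal Z and a \<le> b.\<close>

definition censored_mean :: "real \<Rightarrow> real \<Rightarrow> real" where
  "censored_mean a b = a * Phi a + b * (1 - Phi b) + phi a - phi b"

definition censored_sq_mean :: "real \<Rightarrow> real \<Rightarrow> real" where
  "censored_sq_mean a b = a\<^sup>2 * Phi a + b\<^sup>2 * (1 - Phi b) + a * phi a - b * phi b + Phi b - Phi a"

definition censored_var :: "real \<Rightarrow> real \<Rightarrow> real" where
  "censored_var a b = censored_sq_mean a b - (censored_mean a b)\<^sup>2"

lemma censored_var_minus: "censored_var (- b) (- a) = censored_var a b"
proof -
  have "censored_mean (- b) (- a) = - censored_mean a b"
    unfolding censored_mean_def by (simp add: Phi_minus phi_minus algebra_simps)
  moreover have "censored_sq_mean (- b) (- a) = censored_sq_mean a b"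
    unfolding censored_sq_mean_def by (simp add: Phi_minus phi_minus algebra_simps)
  ultimately show ?thesis unfolding censored_var_def by simp
qed

lemma censored_var_window_has_real_derivative:
  "((\<lambda>c. censored_var c (c + L)) has_real_derivative
     2 * c * Phi c + 2 * (c + L) * (1 - Phi (c + L))
       - 2 * censored_mean c (c + L) * (Phi c + 1 - Phi (c + L))) (at c)"
proof -
  have mean: "((\<lambda>c. censored_mean c (c + L)) has_real_derivative Phi c + 1 - Phi (c + L)) (at c)"
    unfolding censored_mean_def
    by (auto intro!: derivative_eq_intros Phi_has_real_derivative[THEN DERIV_chain2]
        phi_has_real_derivative[THEN DERIV_chain2] Phi_has_real_derivative phi_has_real_derivative
        simp: algebra_simps)
  have sq_mean: "((\<lambda>c. censored_sq_mean c (c + L)) has_real_derivative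
      2 * c * Phi c + 2 * (c + L) * (1 - Phi (c + L))) (at c)"
    unfolding censored_sq_mean_def
    by (auto intro!: derivative_eq_intros Phi_has_real_derivative[THEN DERIV_chain2]
        phi_has_real_derivative[THEN DERIV_chain2] Phi_has_real_derivative phi_has_real_derivative
        simp: algebra_simps power2_eq_square)
  show ?thesis
    unfolding censored_var_def by (auto intro!: derivative_eq_intros mean sq_mean simp: algebra_simps)
qed

lemma censored_var_window_deriv_nonpos:
  assumes "0 \<le> L" "- L / 2 \<le> c"
  shows "2 * c * Phi c + 2 * (c + L) * (1 - Phi (c + L))
           - 2 * censored_mean c (c + L) * (Phi c + 1 - Phi (c + L)) \<le> 0"
proof -
  define b where "b = c + L"
  define I where "I = Phi_antideriv b - Phi_antideriv c"
  have P: "0 < Phi c" by (rule Phi_pos)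
  have Q: "0 < 1 - Phi b" using Phi_pos[of "- b"] unfolding Phi_minus by simp
  have mean: "censored_mean c b = b - I"
    unfolding censored_mean_def I_def Phi_antideriv_def by (simp add: algebra_simps)
  have "I / Phi c \<le> (Phi_antideriv (- c) - Phi_antideriv (- b)) / Phi (- b)"
    using Phi_antideriv_increment_ratio_antimono[OF assms(1), of "- b" c] assms
    by (simp add: I_def b_def)
  also have "\<dots> = (L - I) / (1 - Phi b)"
    unfolding Phi_antideriv_minus Phi_minus I_def b_def by simp
  finally have "I * (1 - Phi b) \<le> (L - I) * Phi c" using P Q by (simp add: field_simps)
  then show ?thesis
    unfolding b_def[symmetric] mean by (simp add: b_def algebra_simps)
qed

lemma censored_var_window_ge:
  assumes "0 \<le> L" "- L \<le> c" "c \<le> 0"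
  shows "censored_var 0 L \<le> censored_var c (c + L)"
proof -
  have decreasing: "censored_var 0 L \<le> censored_var c (c + L)" if "- L / 2 \<le> c" "c \<le> 0" for c
  proof -
    have "censored_var 0 (0 + L) \<le> censored_var c (c + L)"
    proof (rule DERIV_nonpos_imp_nonincreasing[OF \<open>c \<le> 0\<close>])
      fix x assume "c \<le> x"
      then have "- L / 2 \<le> x" using that by linarith
      then show "\<exists>D. ((\<lambda>c. censored_var c (c + L)) has_real_derivative D) (at x) \<and> D \<le> 0"
        using censored_var_window_has_real_derivative censored_var_window_deriv_nonpos[OF assms(1)]
        by blast
    qed
    then show ?thesis by simp
  qed
  \<comment> \<open>Windows with c < -L/2 are mirror images of windows with c > -L/2.\<close>
  show ?thesis
  proof (cases "- L / 2 \<le> c")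
    case False
    then have "censored_var 0 L \<le> censored_var (- (c + L)) (- (c + L) + L)"
      using assms by (intro decreasing) auto
    also have "\<dots> = censored_var c (c + L)"
      using censored_var_minus[of "c + L" c] by simp
    finally show ?thesis .
  qed (use decreasing assms in simp)
qed

section \<open>Censored normal variables\<close>

definition censor :: "real \<Rightarrow> real \<Rightarrow> real \<Rightarrow> real" where
  "censor a b z = max a (min b z)"

lemma borel_measurable_censor[measurable]: "censor a b \<in> borel_measurable borel"
  unfolding censor_def by measurable

lemma abs_censor_le: "\<bar>censor a b z\<bar> \<le> \<bar>a\<bar> + \<bar>b\<bar>"
  unfolding censor_def by auto

lemma censor_Lipschitz: "a \<le> b \<Longrightarrow> \<bar>censor a b x - censor a b y\<bar> \<le> \<bar>x - y\<bar>"
  unfolding censor_def by (auto simp: max_def min_def abs_if)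

lemma censor_censor: "a \<le> c \<Longrightarrow> c \<le> d \<Longrightarrow> d \<le> b \<Longrightarrow> censor c d (censor a b z) = censor c d z"
  unfolding censor_def by (auto simp: max_def min_def)

lemma censor_affine:
  assumes "0 < s" "a \<le> b"
  shows "censor a b (m + s * z) = m + s * censor ((a - m) / s) ((b - m) / s) z"
  using assms unfolding censor_def
  by (auto simp: max_def min_def field_simps)

lemma (in prob_space) integrable_censor_power:
  assumes [measurable]: "f \<in> borel_measurable M"
  shows "integrable M (\<lambda>x. censor a b (f x) ^ k)"
proof (rule integrable_const_bound[where B = "(\<bar>a\<bar> + \<bar>b\<bar>) ^ k"])
  show "AE x in M. norm (censor a b (f x) ^ k) \<le> (\<bar>a\<bar> + \<bar>b\<bar>) ^ k"
    unfolding real_norm_def power_abs by (intro AE_I2 power_mono abs_censor_le) simp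
qed simp

interpretation std_normal: prob_space std_normal
  unfolding std_normal_def by (rule prob_space_normal_density) simp

lemma integral_std_normal:
  assumes "f \<in> borel_measurable borel"
  shows "std_normal.expectation f = (LBINT z=-\<infinity>..\<infinity>. phi z * f z)"
  unfolding std_normal_def
  by (subst integral_density) (auto simp: assms interval_lebesgue_integral_def set_lebesgue_integral_def)

lemma integrable_std_normal_censor_power: "integrable std_normal (\<lambda>z. censor a b z ^ k)"
  using std_normal.integrable_censor_power[of "\<lambda>z. z"] by (simp add: std_normal_def)

lemma integrable_std_normal_iff:
  assumes "f \<in> borel_measurable borel"
  shows "integrable std_normal f \<longleftrightarrow> integrable lborel (\<lambda>z. phi z * f z)"
  unfolding std_normal_def using assms by (subst integrable_density) auto

lemma interval_integral_split3:
  fixes f :: "real \<Rightarrow> real"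
  assumes "integrable lborel f"
  shows "(LBINT z=-\<infinity>..\<infinity>. f z)
    = (LBINT z=-\<infinity>..ereal a. f z) + (LBINT z=ereal a..ereal b. f z) + (LBINT z=ereal b..\<infinity>. f z)"
  using interval_integral_sum[of "-\<infinity>" "ereal a" \<infinity> f] interval_integral_sum[of "ereal a" "ereal b" \<infinity> f]
  by (simp add: interval_integrable_of_integrable[OF assms])

lemma std_normal_expectation_censor_power:
  fixes k :: nat
  assumes "a \<le> b" and antideriv: "\<And>x. (F has_real_derivative x ^ k * phi x) (at x)"
  shows "std_normal.expectation (\<lambda>z. censor a b z ^ k)
    = a ^ k * Phi a + (F b - F a) + b ^ k * (1 - Phi b)"
proof -
  have "std_normal.expectation (\<lambda>z. censor a b z ^ k) = (LBINT z=-\<infinity>..\<infinity>. phi z * censor a b z ^ k)"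
    by (rule integral_std_normal) simp
  also have "\<dots> = (LBINT z=-\<infinity>..ereal a. phi z * censor a b z ^ k)
      + (LBINT z=ereal a..ereal b. phi z * censor a b z ^ k)
      + (LBINT z=ereal b..\<infinity>. phi z * censor a b z ^ k)"
    using integrable_std_normal_censor_power[of a b k]
    by (intro interval_integral_split3) (simp add: integrable_std_normal_iff)
  also have "(LBINT z=-\<infinity>..ereal a. phi z * censor a b z ^ k) = (LBINT z=-\<infinity>..ereal a. a ^ k * phi z)"
    by (rule interval_integral_cong) (use assms in \<open>auto simp: censor_def einterval_def\<close>)
  also have "(LBINT z=ereal a..ereal b. phi z * censor a b z ^ k) = (LBINT z=ereal a..ereal b. z ^ k * phi z)"
    by (rule interval_integral_cong) (use assms in \<open>auto simp: censor_def einterval_def\<close>)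
  also have "\<dots> = F b - F a"
  proof (rule interval_integral_FTC_finite)
    show "continuous_on {min a b..max a b} (\<lambda>z. z ^ k * phi z)"
      by (intro continuous_intros continuous_on_phi)
  qed (use antideriv in \<open>auto simp: has_real_derivative_iff_has_vector_derivative
        has_vector_derivative_at_within\<close>)
  also have "(LBINT z=ereal b..\<infinity>. phi z * censor a b z ^ k) = (LBINT z=ereal b..\<infinity>. b ^ k * phi z)"
    by (rule interval_integral_cong) (use assms in \<open>auto simp: censor_def einterval_def\<close>)
  finally show ?thesis by (simp add: Phi_def Phi_upper_tail)
qed

lemma std_normal_variance_censor:
  assumes "a \<le> b"
  shows "std_normal.variance (censor a b) = censored_var a b"
proof -
  have mean: "std_normal.expectation (\<lambda>z. censor a b z ^ 1) = censored_mean a b"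
    by (subst std_normal_expectation_censor_power[OF assms, where F = "\<lambda>x. - phi x"])
      (auto intro!: derivative_eq_intros phi_has_real_derivative simp: censored_mean_def)
  have sq_mean: "std_normal.expectation (\<lambda>z. censor a b z ^ 2) = censored_sq_mean a b"
    by (subst std_normal_expectation_censor_power[OF assms, where F = "\<lambda>x. Phi x - x * phi x"])
      (auto intro!: derivative_eq_intros phi_has_real_derivative Phi_has_real_derivative
        simp: censored_sq_mean_def power2_eq_square algebra_simps)
  show ?thesis
    using integrable_std_normal_censor_power[of a b 1] integrable_std_normal_censor_power[of a b 2]
      mean sq_mean
    by (subst std_normal.variance_eq) (simp_all add: censored_var_def)
qed

lemma g_eq_censored_var:
  assumes "0 \<le> L"
  shows "g L 0 = censored_var 0 L"
proof -
  have "g L 0 = std_normal.variance (censor 0 L)"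
    unfolding g_def Let_def censor_def ..
  then show ?thesis using std_normal_variance_censor[OF assms] by simp
qed

lemma integral_normal_density_eq_std_normal:
  fixes f :: "real \<Rightarrow> real"
  assumes "0 < \<sigma>" and [measurable]: "f \<in> borel_measurable borel"
  shows "integral\<^sup>L (density lborel (normal_density 0 \<sigma>)) f = std_normal.expectation (\<lambda>z. f (\<sigma> * z))"
proof -
  have density: "\<sigma> * normal_density 0 \<sigma> (\<sigma> * z) = phi z" for z
    using assms(1) by (simp add: normal_density_def real_sqrt_mult field_simps power2_eq_square)
  have "integral\<^sup>L (density lborel (normal_density 0 \<sigma>)) f = (\<integral>y. normal_density 0 \<sigma> y * f y \<partial>lborel)"
    by (subst integral_density) auto
  also have "\<dots> = \<bar>\<sigma>\<bar> *\<^sub>R (\<integral>z. normal_density 0 \<sigma> (0 + \<sigma> * z) * f (0 + \<sigma> * z) \<partial>lborel)"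
    by (rule lborel_integral_real_affine) (use assms in auto)
  also have "\<dots> = (\<integral>z. \<sigma> * normal_density 0 \<sigma> (\<sigma> * z) * f (\<sigma> * z) \<partial>lborel)"
    using assms(1) by (simp add: mult.assoc)
  also have "\<dots> = (\<integral>z. phi z * f (\<sigma> * z) \<partial>lborel)"
    using density by simp
  also have "\<dots> = std_normal.expectation (\<lambda>z. f (\<sigma> * z))"
    unfolding std_normal_def by (subst integral_density) auto
  finally show ?thesis .
qed

lemma variance_censored_normal_ge:
  assumes "0 < \<sigma>" "\<bar>\<mu>\<bar> \<le> r" "0 < q" "q \<le> r"
  shows "g (2 * q / \<sigma>) 0 * \<sigma>\<^sup>2
    \<le> prob_space.variance (density lborel (normal_density 0 \<sigma>)) (\<lambda>y. censor (- r) r (\<mu> + y))"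
proof -
  define a where "a = (- r - \<mu>) / \<sigma>"
  define b where "b = (r - \<mu>) / \<sigma>"
  define \<beta> where "\<beta> = 2 * q / \<sigma>"
  \<comment> \<open>The standardized window [a, b] contains 0 and has length at least \<beta>, so it contains
    a window [c, c + \<beta>] with -\<beta> \<le> c \<le> 0.\<close>
  define c where "c = max a (- \<beta>)"
  have "a \<le> 0" "0 \<le> b" "a + \<beta> \<le> b" "0 \<le> \<beta>"
    using assms unfolding a_def b_def \<beta>_def by (auto simp: field_simps)
  then have window: "a \<le> c" "c + \<beta> \<le> b" "- \<beta> \<le> c" "c \<le> 0" "0 \<le> \<beta>"
    unfolding c_def by auto
  have integrable: "integrable std_normal (censor a b)" "integrable std_normal (\<lambda>z. (censor a b z)\<^sup>2)"
    using integrable_std_normal_censor_power[of a b 1] integrable_std_normal_censor_power[of a b 2]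
    by simp_all
  have "g \<beta> 0 = censored_var 0 \<beta>" by (rule g_eq_censored_var[OF \<open>0 \<le> \<beta>\<close>])
  also have "\<dots> \<le> censored_var c (c + \<beta>)" using window by (intro censored_var_window_ge)
  also have "\<dots> = std_normal.variance (\<lambda>z. censor c (c + \<beta>) (censor a b z))"
    using window censor_censor[of a c "c + \<beta>" b] by (simp add: std_normal_variance_censor)
  also have "\<dots> \<le> std_normal.variance (censor a b)"
    using window censor_Lipschitz integrable by (intro std_normal.variance_Lipschitz_le) auto
  finally have "g \<beta> 0 * \<sigma>\<^sup>2 \<le> std_normal.variance (censor a b) * \<sigma>\<^sup>2"
    by (rule mult_right_mono) simp
  also have "\<dots> = std_normal.variance (\<lambda>z. \<mu> + \<sigma> * censor a b z)"
    using std_normal.variance_affine_integrable[OF integrable(1), of \<mu> \<sigma>] by (simp only: mult.commute)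
  also have "(\<lambda>z. \<mu> + \<sigma> * censor a b z) = (\<lambda>z. censor (- r) r (\<mu> + \<sigma> * z))"
    using assms censor_affine[of \<sigma> "- r" r \<mu>] by (simp add: a_def b_def)
  also have "std_normal.variance \<dots>
      = prob_space.variance (density lborel (normal_density 0 \<sigma>)) (\<lambda>y. censor (- r) r (\<mu> + y))"
    using integral_normal_density_eq_std_normal[OF assms(1)] by simp
  finally show ?thesis unfolding \<beta>_def .
qed

section \<open>Censored perturbed contexts\<close>

lemma ctx_eq_censor: "0 \<le> q j \<Longrightarrow> ctx q \<mu> e j = censor (- q j) (q j) (\<mu> j + e j)"
  unfolding ctx_def censor_def by (auto simp: max_def min_def)

theorem lemma1:
  fixes \<sigma>1 :: real and q \<mu> :: "'n::finite \<Rightarrow> real"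
  assumes "\<sigma>1 > 0"
    and "\<And>j. q j > 0"
    and "\<And>j. \<bar>\<mu> j\<bar> \<le> q j"
  shows "lambda_min (\<chi> i k. LINT e|gauss_vec \<sigma>1. ctx q \<mu> e i * ctx q \<mu> e k)
           \<ge> g (2 * Min (range q) / \<sigma>1) 0 * \<sigma>1\<^sup>2"
proof -
  define N where "N = density lborel (normal_density 0 \<sigma>1)"
  interpret N: prob_space N
    unfolding N_def using assms(1) by (rule prob_space_normal_density)
  define X where "X j y = censor (- q j) (q j) (\<mu> j + y)" for j y
  have integrable: "integrable N (\<lambda>y. X j y ^ k)" for j k
    unfolding X_def by (rule N.integrable_censor_power) (simp add: N_def)
  have ctx: "ctx q \<mu> e j = X j (e j)" for e j
    unfolding X_def using assms(2)[of j] by (simp add: ctx_eq_censor)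
  have "(LINT e|gauss_vec \<sigma>1. ctx q \<mu> e i * ctx q \<mu> e k)
      = N.expectation (X i) * N.expectation (X k) + (if i = k then N.variance (X i) else 0)" for i k
    unfolding ctx gauss_vec_def N_def[symmetric]
    by (rule N.integral_PiM_coordinate_products[of X]) (use integrable[of _ 1] integrable[of _ 2] in simp_all)
  moreover have "g (2 * Min (range q) / \<sigma>1) 0 * \<sigma>1\<^sup>2 \<le> N.variance (X j)" for j
    unfolding N_def X_def
  proof (rule variance_censored_normal_ge)
    show "0 < Min (range q)" using assms(2) by (simp add: Min_gr_iff)
    show "Min (range q) \<le> q j" by (simp add: Min_le_iff)
  qed (use assms in auto)
  ultimately show ?thesis
    by (intro lambda_min_rank_one_plus_diagonal_ge) auto
qed

end
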